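(* (Variable Confidence Level Bound.) Let $L$ be a positive integer and $X_1,\dots,X_L$ i.i.d. random variables supported on $[0,1]$ with mean $\mu$. For any $a>0$ and $b>0$, \[ \Pr\Big(\forall t\in\{1,\dots,L\}:\ \Big|\frac1t\sum_{i=1}^tX_i-\mu\Big|\le\sqrt{\frac{a+b\ln(L/t)}{t}}\Big)\ge 1-\frac{2^{b/2+2}}{2^{b/2}-1}\exp(-a/2). \] *)

theory Defs
  imports "HOL-Probability.Probability"
begin

end

(*
  For fixed lambda, Hoeffding's lemma makes the running products of
  exp (lambda (X_i - mu) - lambda^2 / 8) a nonnegative supermartingale of mean at most 1.
  Freezing it once it reaches e^c and applying Markov's inequality gives Ville's maximal
  inequality: the products ever reach e^c with probability at most e^-c.

  To make the bound uniform in t, peel {1..L} into the dyadic blocks L/2^(j+1) < t <= L/2^j.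
  Block j gets the level c_j = a + j b ln 2 and the parameter lambda_j tuned to time L/2^j;
  a deviation larger than sqrt ((a + b ln (L/t)) / t) at a time t of block j then pushes the
  j-th product above e^(c_j). Summing e^(-c_j) = e^-a 2^(-j b) over j gives
  e^-a / (1 - 2^-b); the lower deviations are the upper deviations of -X_i, and twice this
  bound is below the constant of the statement.
*)
theory Submission
  imports Defs
begin

lemma (in prob_space) indep_var_nn_integral_mult:
  fixes X1 X2 :: "'a \<Rightarrow> real"
  assumes "indep_var borel X1 borel X2" "\<And>\<omega>. 0 \<le> X1 \<omega>" "\<And>\<omega>. 0 \<le> X2 \<omega>"
  shows "(\<integral>\<^sup>+\<omega>. ennreal (X1 \<omega> * X2 \<omega>) \<partial>M) = (\<integral>\<^sup>+\<omega>. X1 \<omega> \<partial>M) * (\<integral>\<^sup>+\<omega>. X2 \<omega> \<partial>M)"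
proof -
  have borel_eq: "(\<lambda>_. borel) = case_bool borel borel"
    by (simp add: fun_eq_iff split: bool.split)
  have "indep_var borel (ennreal \<circ> X1) borel (ennreal \<circ> X2)"
    by (rule indep_var_compose[OF assms(1)]) auto
  then have "indep_vars (\<lambda>_. borel) (case_bool (ennreal \<circ> X1) (ennreal \<circ> X2)) UNIV"
    unfolding indep_var_def borel_eq .
  then have "(\<integral>\<^sup>+\<omega>. (\<Prod>i\<in>UNIV. case_bool (ennreal \<circ> X1) (ennreal \<circ> X2) i \<omega>) \<partial>M)
               = (\<Prod>i\<in>UNIV. \<integral>\<^sup>+\<omega>. case_bool (ennreal \<circ> X1) (ennreal \<circ> X2) i \<omega> \<partial>M)"
    by (intro indep_vars_nn_integral) auto
  then show ?thesis
    using assms(2,3) by (simp add: UNIV_bool ennreal_mult mult.commute o_def)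
qed

primrec stopped_prod :: "real \<Rightarrow> nat \<Rightarrow> (nat \<Rightarrow> real) \<Rightarrow> real" where
  "stopped_prod C 0 f = 1"
| "stopped_prod C (Suc k) f =
     (if C \<le> stopped_prod C k f then stopped_prod C k f else stopped_prod C k f * f (Suc k))"

lemma stopped_prod_cong:
  "(\<And>i. i \<in> {1..k} \<Longrightarrow> f i = g i) \<Longrightarrow> stopped_prod C k f = stopped_prod C k g"
  by (induction k) auto

lemma stopped_prod_nonneg: "(\<And>i. 0 \<le> f i) \<Longrightarrow> 0 \<le> stopped_prod C k f"
  by (induction k) auto

lemma stopped_prod_ge_or_eq_prod: "C \<le> stopped_prod C k f \<or> stopped_prod C k f = (\<Prod>i=1..k. f i)"
  by (induction k) (auto simp: prod.nat_ivl_Suc' mult.commute)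

lemma stopped_prod_ge_mono: "C \<le> stopped_prod C k f \<Longrightarrow> k \<le> m \<Longrightarrow> C \<le> stopped_prod C m f"
  by (induction m) (auto simp: le_Suc_eq)

lemma stopped_prod_ge_if_prod_ge: "t \<le> n \<Longrightarrow> C \<le> (\<Prod>i=1..t. f i) \<Longrightarrow> C \<le> stopped_prod C n f"
  using stopped_prod_ge_or_eq_prod[of C t f] stopped_prod_ge_mono[of C t f n] by auto

lemma borel_measurable_stopped_prod:
  "{1..k} \<subseteq> I \<Longrightarrow> stopped_prod C k \<in> borel_measurable (PiM I (\<lambda>_. borel))"
proof (induction k)
  case 0
  have "stopped_prod C 0 = (\<lambda>_. 1)"
    by (rule ext) simp
  then show ?case
    by simp
next
  case (Suc k)
  have "{1..k} \<subseteq> I"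
    using Suc.prems by auto
  with Suc.IH have [measurable]: "stopped_prod C k \<in> borel_measurable (PiM I (\<lambda>_. borel))"
    by blast
  have [measurable]: "(\<lambda>f. f (Suc k)) \<in> borel_measurable (PiM I (\<lambda>_. borel))"
    using Suc.prems by (intro measurable_component_singleton) auto
  show ?case
    unfolding stopped_prod.simps by measurable
qed

lemma borel_measurable_stopped_prod_process:
  assumes "\<And>i. i \<in> {1..k} \<Longrightarrow> Y i \<in> borel_measurable M"
  shows "(\<lambda>\<omega>. stopped_prod C k (\<lambda>i. Y i \<omega>)) \<in> borel_measurable M"
  using assms
proof (induction k)
  case (Suc k)
  then have [measurable]: "(\<lambda>\<omega>. stopped_prod C k (\<lambda>i. Y i \<omega>)) \<in> borel_measurable M"
    and [measurable]: "Y (Suc k) \<in> borel_measurable M"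
    by auto
  show ?case
    unfolding stopped_prod.simps by measurable
qed simp

lemma (in prob_space) indep_var_stopped_prod_next:
  assumes ind: "indep_vars (\<lambda>_. borel) Y {1..n}" and "k < n"
  shows "indep_var borel (\<lambda>\<omega>. stopped_prod C k (\<lambda>i. Y i \<omega>)) borel (Y (Suc k))"
proof -
  have "indep_var borel (stopped_prod C k \<circ> (\<lambda>\<omega>. \<lambda>i\<in>{1..k}. Y i \<omega>))
                  borel ((\<lambda>f. f (Suc k)) \<circ> (\<lambda>\<omega>. \<lambda>i\<in>{Suc k}. Y i \<omega>))"
    using assms
    by (intro indep_var_compose[OF indep_var_restrict[OF ind]] borel_measurable_stopped_prod
        measurable_component_singleton) auto
  moreover have "stopped_prod C k (\<lambda>i\<in>{1..k}. Y i \<omega>) = stopped_prod C k (\<lambda>i. Y i \<omega>)" for \<omega>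
    by (rule stopped_prod_cong) simp
  ultimately show ?thesis
    by (simp add: comp_def)
qed

lemma (in prob_space) nn_integral_stopped_prod_Suc_le:
  fixes Y :: "nat \<Rightarrow> 'a \<Rightarrow> real"
  assumes ind: "indep_vars (\<lambda>_. borel) Y {1..n}"
    and nonneg: "\<And>i \<omega>. 0 \<le> Y i \<omega>"
    and mean_le_1: "\<And>i. i \<in> {1..n} \<Longrightarrow> (\<integral>\<^sup>+\<omega>. Y i \<omega> \<partial>M) \<le> 1"
    and "k < n"
  shows "(\<integral>\<^sup>+\<omega>. stopped_prod C (Suc k) (\<lambda>i. Y i \<omega>) \<partial>M)
           \<le> (\<integral>\<^sup>+\<omega>. stopped_prod C k (\<lambda>i. Y i \<omega>) \<partial>M)"
proof -
  define Z where "Z = (\<lambda>\<omega>. stopped_prod C k (\<lambda>i. Y i \<omega>))"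
  define G where "G = (\<lambda>\<omega>. if C \<le> Z \<omega> then 0 else Z \<omega>)"
  define H where "H = (\<lambda>\<omega>. if C \<le> Z \<omega> then Z \<omega> else 0)"
  have Y_measurable: "Y i \<in> borel_measurable M" if "i \<in> {1..n}" for i
    using ind that by (auto simp: indep_vars_def)
  have [measurable]: "Z \<in> borel_measurable M" "Y (Suc k) \<in> borel_measurable M"
    unfolding Z_def using \<open>k < n\<close>
    by (auto intro!: borel_measurable_stopped_prod_process Y_measurable)
  have [measurable]: "G \<in> borel_measurable M" "H \<in> borel_measurable M"
    unfolding G_def H_def by measurable
  have G_nonneg: "0 \<le> G \<omega>" and H_nonneg: "0 \<le> H \<omega>" for \<omega>
    using stopped_prod_nonneg[OF nonneg] by (auto simp: G_def H_def Z_def)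
  have "indep_var borel ((\<lambda>z. if C \<le> z then 0 else z) \<circ> Z) borel (id \<circ> Y (Suc k))"
    unfolding Z_def
  proof (rule indep_var_compose[OF indep_var_stopped_prod_next[OF ind \<open>k < n\<close>]])
    show "(\<lambda>z::real. if C \<le> z then 0 else z) \<in> borel_measurable borel"
      by measurable
  qed simp
  then have "indep_var borel G borel (Y (Suc k))"
    by (simp add: G_def comp_def)
  then have "(\<integral>\<^sup>+\<omega>. ennreal (G \<omega> * Y (Suc k) \<omega>) \<partial>M)
               = (\<integral>\<^sup>+\<omega>. G \<omega> \<partial>M) * (\<integral>\<^sup>+\<omega>. Y (Suc k) \<omega> \<partial>M)"
    using G_nonneg nonneg by (rule indep_var_nn_integral_mult)
  also have "\<dots> \<le> (\<integral>\<^sup>+\<omega>. G \<omega> \<partial>M)"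
    using mult_left_mono[OF mean_le_1] \<open>k < n\<close> by fastforce
  finally have GY_le_G: "(\<integral>\<^sup>+\<omega>. ennreal (G \<omega> * Y (Suc k) \<omega>) \<partial>M) \<le> (\<integral>\<^sup>+\<omega>. G \<omega> \<partial>M)" .
  have "(\<integral>\<^sup>+\<omega>. stopped_prod C (Suc k) (\<lambda>i. Y i \<omega>) \<partial>M)
          = (\<integral>\<^sup>+\<omega>. ennreal (H \<omega>) + ennreal (G \<omega> * Y (Suc k) \<omega>) \<partial>M)"
    by (intro nn_integral_cong) (simp add: G_def H_def Z_def)
  also have "\<dots> \<le> (\<integral>\<^sup>+\<omega>. ennreal (H \<omega>) + ennreal (G \<omega>) \<partial>M)"
    using GY_le_G by (simp add: nn_integral_add add_left_mono)
  also have "\<dots> = (\<integral>\<^sup>+\<omega>. Z \<omega> \<partial>M)"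
    by (intro nn_integral_cong) (simp add: G_def H_def)
  finally show ?thesis
    by (simp add: Z_def)
qed

lemma (in prob_space) nn_integral_stopped_prod_le_1:
  fixes Y :: "nat \<Rightarrow> 'a \<Rightarrow> real"
  assumes ind: "indep_vars (\<lambda>_. borel) Y {1..n}"
    and nonneg: "\<And>i \<omega>. 0 \<le> Y i \<omega>"
    and mean_le_1: "\<And>i. i \<in> {1..n} \<Longrightarrow> (\<integral>\<^sup>+\<omega>. Y i \<omega> \<partial>M) \<le> 1"
    and "k \<le> n"
  shows "(\<integral>\<^sup>+\<omega>. stopped_prod C k (\<lambda>i. Y i \<omega>) \<partial>M) \<le> 1"
  using \<open>k \<le> n\<close>
proof (induction k)
  case 0
  then show ?case
    by (simp add: emeasure_space_1)
next
  case (Suc k)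
  then show ?case
    using nn_integral_stopped_prod_Suc_le[OF ind nonneg mean_le_1, of k C] by simp
qed

lemma (in prob_space) prob_exists_prod_ge_le:
  fixes Y :: "nat \<Rightarrow> 'a \<Rightarrow> real"
  assumes ind: "indep_vars (\<lambda>_. borel) Y {1..n}"
    and nonneg: "\<And>i \<omega>. 0 \<le> Y i \<omega>"
    and mean_le_1: "\<And>i. i \<in> {1..n} \<Longrightarrow> (\<integral>\<^sup>+\<omega>. Y i \<omega> \<partial>M) \<le> 1"
    and "0 < C"
  shows "prob {\<omega>\<in>space M. \<exists>t\<in>{1..n}. C \<le> (\<Prod>i=1..t. Y i \<omega>)} \<le> 1 / C"
proof -
  define S where "S = {\<omega>\<in>space M. C \<le> stopped_prod C n (\<lambda>i. Y i \<omega>)}"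
  have [measurable]: "(\<lambda>\<omega>. stopped_prod C n (\<lambda>i. Y i \<omega>)) \<in> borel_measurable M"
    using ind by (intro borel_measurable_stopped_prod_process) (auto simp: indep_vars_def)
  then have S_sets: "S \<in> sets M"
    unfolding S_def by measurable
  have "ennreal C * emeasure M S = (\<integral>\<^sup>+\<omega>. ennreal C * indicator S \<omega> \<partial>M)"
    using S_sets by (simp add: nn_integral_cmult_indicator)
  also have "\<dots> \<le> (\<integral>\<^sup>+\<omega>. stopped_prod C n (\<lambda>i. Y i \<omega>) \<partial>M)"
    by (intro nn_integral_mono) (auto simp: S_def indicator_def intro!: ennreal_leI)
  also have "\<dots> \<le> 1"
    by (rule nn_integral_stopped_prod_le_1[OF ind nonneg mean_le_1 order_refl])
  finally have "ennreal (C * prob S) \<le> 1"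
    using \<open>0 < C\<close> by (simp add: emeasure_eq_measure ennreal_mult)
  then have "prob S \<le> 1 / C"
    using \<open>0 < C\<close> by (simp add: field_simps)
  moreover have "{\<omega>\<in>space M. \<exists>t\<in>{1..n}. C \<le> (\<Prod>i=1..t. Y i \<omega>)} \<subseteq> S"
    unfolding S_def using stopped_prod_ge_if_prod_ge by fastforce
  then have "prob {\<omega>\<in>space M. \<exists>t\<in>{1..n}. C \<le> (\<Prod>i=1..t. Y i \<omega>)} \<le> prob S"
    using S_sets by (rule finite_measure_mono)
  ultimately show ?thesis
    by linarith
qed

lemma (in prob_space) prob_exists_partial_sum_exponent_ge_le:
  fixes X :: "nat \<Rightarrow> 'a \<Rightarrow> real"
  assumes ind: "indep_vars (\<lambda>_. borel) X {1..n}"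
    and mgf: "\<And>i. i \<in> {1..n} \<Longrightarrow> (\<integral>\<^sup>+\<omega>. exp (l * (X i \<omega> - \<mu>)) \<partial>M) \<le> exp (l^2 / 8)"
  shows "prob {\<omega>\<in>space M. \<exists>t\<in>{1..n}. c \<le> l * (\<Sum>i=1..t. X i \<omega> - \<mu>) - real t * l^2 / 8}
           \<le> exp (- c)"
proof -
  define Y where "Y i \<omega> = exp (l * (X i \<omega> - \<mu>) - l^2 / 8)" for i \<omega>
  have "prob {\<omega>\<in>space M. \<exists>t\<in>{1..n}. exp c \<le> (\<Prod>i=1..t. Y i \<omega>)} \<le> 1 / exp c"
  proof (rule prob_exists_prod_ge_le)
    show "indep_vars (\<lambda>_. borel) Y {1..n}"
      unfolding Y_def by (rule indep_vars_compose2[OF ind]) auto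
    show "(\<integral>\<^sup>+\<omega>. Y i \<omega> \<partial>M) \<le> 1" if i: "i \<in> {1..n}" for i
    proof -
      have [measurable]: "X i \<in> borel_measurable M"
        using ind i by (auto simp: indep_vars_def)
      have "ennreal (Y i \<omega>) = ennreal (exp (l * (X i \<omega> - \<mu>))) * ennreal (exp (- (l^2 / 8)))"
        for \<omega>
        by (simp add: Y_def mult_exp_exp flip: ennreal_mult)
      then have "(\<integral>\<^sup>+\<omega>. Y i \<omega> \<partial>M) = (\<integral>\<^sup>+\<omega>. exp (l * (X i \<omega> - \<mu>)) \<partial>M) * exp (- (l^2 / 8))"
        by (simp add: nn_integral_multc)
      also have "\<dots> \<le> ennreal (exp (l^2 / 8)) * exp (- (l^2 / 8))"
        using mgf[OF i] by (rule mult_right_mono) simp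
      also have "\<dots> = 1"
        by (simp add: exp_minus flip: ennreal_mult)
      finally show ?thesis .
    qed
  qed (simp_all add: Y_def)
  moreover have "(\<Prod>i=1..t. Y i \<omega>) = exp (l * (\<Sum>i=1..t. X i \<omega> - \<mu>) - real t * l^2 / 8)" for t \<omega>
  proof -
    have "(\<Sum>i=1..t. l * (X i \<omega> - \<mu>) - l^2 / 8) = l * (\<Sum>i=1..t. X i \<omega> - \<mu>) - real t * l^2 / 8"
      by (simp add: sum_subtractf sum_distrib_left right_diff_distrib)
    then show ?thesis
      by (simp add: Y_def flip: exp_sum)
  qed
  ultimately show ?thesis
    by (simp add: exp_minus inverse_eq_divide)
qed

definition peeling_level :: "real \<Rightarrow> real \<Rightarrow> nat \<Rightarrow> real" where
  "peeling_level a b j = a + b * (real j * ln 2)"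

(* the Chernoff parameter that is optimal for the level c_j at time L/2^j *)
definition peeling_rate :: "real \<Rightarrow> real \<Rightarrow> nat \<Rightarrow> nat \<Rightarrow> real" where
  "peeling_rate a b L j = sqrt (8 * peeling_level a b j / (real L / 2^j))"

lemma peeling_level_pos: "0 < a \<Longrightarrow> 0 \<le> b \<Longrightarrow> 0 < peeling_level a b j"
  unfolding peeling_level_def by (simp add: add_pos_nonneg)

lemma exp_neg_peeling_level: "exp (- peeling_level a b j) = exp (- a) * (2 powr (- b))^j"
  by (simp add: peeling_level_def powr_def exp_add[symmetric] exp_of_nat_mult[symmetric]
      algebra_simps)

lemma tuned_exponent_ge:
  fixes t T c c' D :: real
  assumes t: "0 < t" "t \<le> T" "T < 2 * t" and c: "0 < c'" "c' \<le> c"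
    and D: "sqrt (c / t) < D / t"
  shows "c' \<le> sqrt (8 * c' / T) * D - t * (sqrt (8 * c' / T))^2 / 8"
proof -
  have "sqrt (t * c') \<le> sqrt (t * c)"
    using t c by simp
  also have "\<dots> = sqrt (t^2 * (c / t))"
    using t by (simp add: power2_eq_square)
  also have "\<dots> = t * sqrt (c / t)"
    using t by (subst real_sqrt_mult) simp
  also have "\<dots> < D"
    using t D by (simp add: field_simps)
  finally have D_gt: "sqrt (t * c') < D" .
  have "2 * c' \<le> sqrt (8 * t / T) * c'"
    using t c by (intro mult_right_mono) (auto simp: real_le_rsqrt field_simps)
  also have "\<dots> = sqrt (8 * t / T * c'^2)"
    using c by (subst real_sqrt_mult) simp
  also have "\<dots> = sqrt (8 * c' / T * (t * c'))"
    by (rule arg_cong[where f = sqrt]) (simp add: power2_eq_square)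
  also have "\<dots> = sqrt (8 * c' / T) * sqrt (t * c')"
    by (rule real_sqrt_mult)
  also have "\<dots> \<le> sqrt (8 * c' / T) * D"
    using D_gt t c by (intro mult_left_mono) auto
  finally have "2 * c' \<le> sqrt (8 * c' / T) * D" .
  moreover have "t * (sqrt (8 * c' / T))^2 / 8 \<le> c'"
    using t c by (simp add: field_simps)
  ultimately show ?thesis
    by linarith
qed

lemma ex_dyadic_block:
  fixes t L :: nat
  assumes "1 \<le> t" "t \<le> L"
  shows "\<exists>j\<le>L. 2^j * t \<le> L \<and> L < 2^(j+1) * t"
proof -
  have "1 \<le> L div t"
    using assms by (simp add: Suc_le_eq div_greater_zero_iff)
  then obtain j where "2^j \<le> L div t" "L div t < 2^(j+1)"
    using ex_power_ivl1[of 2 "L div t"] by auto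
  then have block: "2^j * t \<le> L" "L < 2^(j+1) * t"
    using assms by (auto simp: less_eq_div_iff_mult_less_eq div_less_iff_less_mult)
  have "j < 2^j"
    by (rule less_exp)
  also have "\<dots> \<le> 2^j * t"
    using assms by simp
  also have "\<dots> \<le> L"
    by (rule block(1))
  finally show ?thesis
    using block by (intro exI[of _ j]) simp
qed

lemma deviation_imp_peeling_exponent_ge:
  fixes a b s :: real and t L :: nat
  assumes "0 < a" "0 < b" "t \<in> {1..L}"
    and deviation: "sqrt ((a + b * ln (real L / real t)) / real t) < s / real t"
  shows "\<exists>j\<le>L. peeling_level a b j
                 \<le> peeling_rate a b L j * s - real t * (peeling_rate a b L j)^2 / 8"
proof -
  obtain j where "j \<le> L" and block: "2^j * t \<le> L" "L < 2^(j+1) * t"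
    using ex_dyadic_block assms(3) by (meson atLeastAtMost_iff)
  then have "real (2^j * t) \<le> real L" "real L < real (2^(j+1) * t)"
    by (simp_all only: of_nat_le_iff of_nat_less_iff)
  then have block_real: "2^j * real t \<le> real L" "real L < 2^(j+1) * real t"
    by simp_all
  have "peeling_level a b j \<le> a + b * ln (real L / real t)"
  proof -
    have "real j * ln 2 = ln (2^j)"
      by (simp add: ln_realpow)
    also have "\<dots> \<le> ln (real L / real t)"
      using block_real(1) assms(3) by (simp add: field_simps)
    finally show ?thesis
      unfolding peeling_level_def using \<open>0 < b\<close> by simp
  qed
  moreover have "real t \<le> real L / 2^j" "real L / 2^j < 2 * real t"
    using block_real by (simp_all add: field_simps)
  ultimately have "peeling_level a b j
                     \<le> peeling_rate a b L j * s - real t * (peeling_rate a b L j)^2 / 8"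
    unfolding peeling_rate_def using assms peeling_level_pos[of a b j]
    by (intro tuned_exponent_ge[where c = "a + b * ln (real L / real t)"]) auto
  with \<open>j \<le> L\<close> show ?thesis
    by blast
qed

lemma sum_atMost_geometric_le:
  fixes q :: real
  assumes "0 \<le> q" "q < 1"
  shows "(\<Sum>j\<le>n. q^j) \<le> 1 / (1 - q)"
proof -
  have "(\<Sum>j\<le>n. q^j) \<le> (\<Sum>j. q^j)"
    using assms by (intro sum_le_suminf summable_geometric) auto
  also have "\<dots> = 1 / (1 - q)"
    using assms by (simp add: suminf_geometric)
  finally show ?thesis .
qed

lemma (in prob_space) prob_peeling_event_le:
  fixes X :: "nat \<Rightarrow> 'a \<Rightarrow> real"
  assumes ind: "indep_vars (\<lambda>_. borel) X {1..L}"
    and mgf: "\<And>i l. i \<in> {1..L} \<Longrightarrow> 0 < l \<Longrightarrow>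
                (\<integral>\<^sup>+\<omega>. exp (l * (X i \<omega> - \<mu>)) \<partial>M) \<le> exp (l^2 / 8)"
    and "0 < a" "0 \<le> b"
  shows "prob {\<omega>\<in>space M. \<exists>t\<in>{1..L}. peeling_level a b j
                 \<le> peeling_rate a b L j * (\<Sum>i=1..t. X i \<omega> - \<mu>) - real t * (peeling_rate a b L j)^2 / 8}
           \<le> exp (- a) * (2 powr (- b))^j"
proof -
  have "(\<integral>\<^sup>+\<omega>. exp (peeling_rate a b L j * (X i \<omega> - \<mu>)) \<partial>M) \<le> exp ((peeling_rate a b L j)^2 / 8)"
    if i: "i \<in> {1..L}" for i
  proof (rule mgf[OF i])
    show "0 < peeling_rate a b L j"
      unfolding peeling_rate_def using i \<open>0 < a\<close> \<open>0 \<le> b\<close> peeling_level_pos[of a b j] by simp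
  qed
  from prob_exists_partial_sum_exponent_ge_le[OF ind this, where c = "peeling_level a b j"]
  show ?thesis
    unfolding exp_neg_peeling_level .
qed

lemma (in prob_space) prob_exists_mean_deviation_gt_le:
  fixes X :: "nat \<Rightarrow> 'a \<Rightarrow> real"
  assumes ind: "indep_vars (\<lambda>_. borel) X {1..L}"
    and mgf: "\<And>i l. i \<in> {1..L} \<Longrightarrow> 0 < l \<Longrightarrow>
                (\<integral>\<^sup>+\<omega>. exp (l * (X i \<omega> - \<mu>)) \<partial>M) \<le> exp (l^2 / 8)"
    and "0 < a" "0 < b"
  shows "prob {\<omega>\<in>space M. \<exists>t\<in>{1..L}.
                 sqrt ((a + b * ln (real L / real t)) / real t) < (\<Sum>i=1..t. X i \<omega>) / real t - \<mu>}
           \<le> exp (- a) / (1 - 2 powr (- b))"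
proof -
  define E where "E j = {\<omega>\<in>space M. \<exists>t\<in>{1..L}. peeling_level a b j
              \<le> peeling_rate a b L j * (\<Sum>i=1..t. X i \<omega> - \<mu>) - real t * (peeling_rate a b L j)^2 / 8}"
    for j
  have E_sets: "E j \<in> sets M" for j
    unfolding E_def
  proof (intro sets.sets_Collect_finite_Ex)
    fix t assume "t \<in> {1..L}"
    then have [measurable]: "(\<lambda>\<omega>. \<Sum>i=1..t. X i \<omega> - \<mu>) \<in> borel_measurable M"
      using ind by (auto simp: indep_vars_def intro!: borel_measurable_sum borel_measurable_diff)
    show "{\<omega>\<in>space M. peeling_level a b j
              \<le> peeling_rate a b L j * (\<Sum>i=1..t. X i \<omega> - \<mu>) - real t * (peeling_rate a b L j)^2 / 8}
            \<in> sets M"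
      by measurable
  qed simp
  have "{\<omega>\<in>space M. \<exists>t\<in>{1..L}.
          sqrt ((a + b * ln (real L / real t)) / real t) < (\<Sum>i=1..t. X i \<omega>) / real t - \<mu>}
        \<subseteq> (\<Union>j\<le>L. E j)"
  proof safe
    fix \<omega> t assume \<omega>: "\<omega> \<in> space M" and t: "t \<in> {1..L}"
      and deviation: "sqrt ((a + b * ln (real L / real t)) / real t) < (\<Sum>i=1..t. X i \<omega>) / real t - \<mu>"
    have "(\<Sum>i=1..t. X i \<omega>) / real t - \<mu> = (\<Sum>i=1..t. X i \<omega> - \<mu>) / real t"
      using t by (simp add: sum_subtractf field_simps)
    with deviation obtain j where "j \<le> L" and "peeling_level a b j
        \<le> peeling_rate a b L j * (\<Sum>i=1..t. X i \<omega> - \<mu>) - real t * (peeling_rate a b L j)^2 / 8"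
      using deviation_imp_peeling_exponent_ge[OF \<open>0 < a\<close> \<open>0 < b\<close> t] by auto
    then show "\<omega> \<in> (\<Union>j\<le>L. E j)"
      unfolding E_def using \<omega> t by blast
  qed
  then have "prob {\<omega>\<in>space M. \<exists>t\<in>{1..L}.
               sqrt ((a + b * ln (real L / real t)) / real t) < (\<Sum>i=1..t. X i \<omega>) / real t - \<mu>}
             \<le> prob (\<Union>j\<le>L. E j)"
    using E_sets by (intro finite_measure_mono) auto
  also have "\<dots> \<le> (\<Sum>j\<le>L. prob (E j))"
    using E_sets by (intro finite_measure_subadditive_finite) auto
  also have "\<dots> \<le> (\<Sum>j\<le>L. exp (- a) * (2 powr (- b))^j)"
    using prob_peeling_event_le[OF ind mgf \<open>0 < a\<close> less_imp_le[OF \<open>0 < b\<close>]]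
    unfolding E_def by (intro sum_mono) blast
  also have "\<dots> = exp (- a) * (\<Sum>j\<le>L. (2 powr (- b))^j)"
    by (simp add: sum_distrib_left)
  also have "\<dots> \<le> exp (- a) * (1 / (1 - 2 powr (- b)))"
    using \<open>0 < b\<close> by (intro mult_left_mono sum_atMost_geometric_le) (auto simp: powr_less_one)
  finally show ?thesis
    by simp
qed

lemma (in prob_space) Hoeffding_nn_integral_exp_le:
  assumes "random_variable borel X" "AE \<omega> in M. X \<omega> \<in> {0..1}" "expectation X = \<mu>" "0 < l"
  shows "(\<integral>\<^sup>+\<omega>. exp (l * (X \<omega> - \<mu>)) \<partial>M) \<le> exp (l^2 / 8)"
    and "(\<integral>\<^sup>+\<omega>. exp (l * (- X \<omega> - - \<mu>)) \<partial>M) \<le> exp (l^2 / 8)"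
proof -
  interpret X: interval_bounded_random_variable M X 0 1
    using assms(1,2) by unfold_locales
  show "(\<integral>\<^sup>+\<omega>. exp (l * (X \<omega> - \<mu>)) \<partial>M) \<le> exp (l^2 / 8)"
    using X.Hoeffdings_lemma_nn_integral[OF \<open>0 < l\<close>] assms(3) by simp
  have "AE \<omega> in M. - X \<omega> \<in> {- 1..0}"
    using assms(2) by eventually_elim auto
  then interpret neg_X: interval_bounded_random_variable M "\<lambda>\<omega>. - X \<omega>" "- 1" 0
    using assms(1) by unfold_locales simp
  show "(\<integral>\<^sup>+\<omega>. exp (l * (- X \<omega> - - \<mu>)) \<partial>M) \<le> exp (l^2 / 8)"
    using neg_X.Hoeffdings_lemma_nn_integral[OF \<open>0 < l\<close>] assms(3) by simp
qed

lemma (in prob_space) prob_forall_abs_le_ge: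
  fixes f :: "'i \<Rightarrow> 'a \<Rightarrow> real"
  assumes "finite T" and f_measurable: "\<And>t. t \<in> T \<Longrightarrow> f t \<in> borel_measurable M"
    and upper: "prob {\<omega>\<in>space M. \<exists>t\<in>T. r t < f t \<omega>} \<le> B"
    and lower: "prob {\<omega>\<in>space M. \<exists>t\<in>T. r t < - f t \<omega>} \<le> B"
  shows "1 - 2 * B \<le> prob {\<omega>\<in>space M. \<forall>t\<in>T. \<bar>f t \<omega>\<bar> \<le> r t}"
proof -
  define U where "U = {\<omega>\<in>space M. \<exists>t\<in>T. r t < f t \<omega>}"
  define D where "D = {\<omega>\<in>space M. \<exists>t\<in>T. r t < - f t \<omega>}"
  have events: "{\<omega>\<in>space M. r t < f t \<omega>} \<in> sets M" "{\<omega>\<in>space M. r t < - f t \<omega>} \<in> sets M"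
    if "t \<in> T" for t
    using f_measurable[OF that] borel_measurable_uminus[OF f_measurable[OF that]]
    unfolding borel_measurable_iff_greater by blast+
  have U_sets: "U \<in> sets M"
    unfolding U_def by (rule sets.sets_Collect_finite_Ex[OF events(1) \<open>finite T\<close>])
  have D_sets: "D \<in> sets M"
    unfolding D_def by (rule sets.sets_Collect_finite_Ex[OF events(2) \<open>finite T\<close>])
  have "{\<omega>\<in>space M. \<forall>t\<in>T. \<bar>f t \<omega>\<bar> \<le> r t} = space M - (U \<union> D)"
    unfolding U_def D_def by (auto simp: abs_le_iff not_less)
  then have "prob {\<omega>\<in>space M. \<forall>t\<in>T. \<bar>f t \<omega>\<bar> \<le> r t} = 1 - prob (U \<union> D)"
    using prob_compl[OF sets.Un[OF U_sets D_sets]] by simp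
  moreover have "prob (U \<union> D) \<le> prob U + prob D"
    by (rule measure_Un_le[OF U_sets D_sets])
  ultimately show ?thesis
    using upper lower unfolding U_def D_def by linarith
qed

lemma peeling_constant_le:
  fixes a b :: real
  assumes "0 < a" "0 < b"
  shows "2 * (exp (- a) / (1 - 2 powr (- b)))
           \<le> 2 powr (b / 2 + 2) / (2 powr (b / 2) - 1) * exp (- a / 2)"
proof -
  define p e where "p = 2 powr (b / 2)" and "e = exp (- a / 2)"
  have p: "1 < p" and e: "0 < e" "e \<le> 1"
    using assms by (auto simp: p_def e_def)
  have exp_a: "exp (- a) = e^2"
    by (simp add: e_def power2_eq_square mult_exp_exp)
  have powr_b: "2 powr (- b) = 1 / p^2"
    by (simp add: p_def power2_eq_square powr_add[symmetric] powr_minus_divide)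
  have powr_b2: "2 powr (b / 2 + 2) = 4 * p"
    by (simp add: p_def powr_add)
  have "p - 1 \<noteq> 0" "p + 1 \<noteq> 0" "p \<noteq> 0" "p * p - 1 \<noteq> 0"
    using p less_1_mult[of p p] by auto
  then have "2 * (e^2 / (1 - 1 / p^2)) = 4 * p / (p - 1) * e * (e * p / (2 * (p + 1)))"
    by (simp add: field_simps power2_eq_square)
  also have "\<dots> \<le> 4 * p / (p - 1) * e * 1"
  proof (rule mult_left_mono)
    have "e * p \<le> 2 * (p + 1)"
      using p e by (smt (verit) mult_left_le_one_le)
    then show "e * p / (2 * (p + 1)) \<le> 1"
      using p by simp
  qed (use p e in simp)
  finally show ?thesis
    unfolding exp_a powr_b powr_b2 p_def[symmetric] e_def[symmetric] by simp
qed

lemma (in prob_space) prob_forall_mean_deviation_le_ge: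
  fixes X :: "nat \<Rightarrow> 'a \<Rightarrow> real"
  assumes ind: "indep_vars (\<lambda>_. borel) X {1..L}"
    and bounded: "\<And>i. i \<in> {1..L} \<Longrightarrow> AE \<omega> in M. X i \<omega> \<in> {0..1}"
    and mean: "\<And>i. i \<in> {1..L} \<Longrightarrow> expectation (X i) = \<mu>"
    and "0 < a" "0 < b"
  shows "1 - 2 * (exp (- a) / (1 - 2 powr (- b)))
           \<le> prob {\<omega>\<in>space M. \<forall>t\<in>{1..L}.
                 \<bar>(\<Sum>i=1..t. X i \<omega>) / real t - \<mu>\<bar> \<le> sqrt ((a + b * ln (real L / real t)) / real t)}"
proof -
  define f where "f t \<omega> = (\<Sum>i=1..t. X i \<omega>) / real t - \<mu>" for t \<omega>
  let ?r = "\<lambda>t. sqrt ((a + b * ln (real L / real t)) / real t)"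
  let ?B = "exp (- a) / (1 - 2 powr (- b))"
  have X_measurable: "X i \<in> borel_measurable M" if "i \<in> {1..L}" for i
    using ind that by (auto simp: indep_vars_def)
  note mgf = Hoeffding_nn_integral_exp_le[OF X_measurable bounded mean]
  have upper: "prob {\<omega>\<in>space M. \<exists>t\<in>{1..L}. ?r t < f t \<omega>} \<le> ?B"
    unfolding f_def by (rule prob_exists_mean_deviation_gt_le[OF ind mgf(1) \<open>0 < a\<close> \<open>0 < b\<close>])
  have indep_neg: "indep_vars (\<lambda>_. borel) (\<lambda>i \<omega>. - X i \<omega>) {1..L}"
    using ind by (rule indep_vars_compose2) auto
  have neg: "(\<Sum>i=1..t. - X i \<omega>) / real t - - \<mu> = - f t \<omega>" for t \<omega>
    by (simp add: f_def sum_negf)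
  have lower: "prob {\<omega>\<in>space M. \<exists>t\<in>{1..L}. ?r t < - f t \<omega>} \<le> ?B"
    using prob_exists_mean_deviation_gt_le[OF indep_neg mgf(2) \<open>0 < a\<close> \<open>0 < b\<close>]
    unfolding neg .
  have "f t \<in> borel_measurable M" if "t \<in> {1..L}" for t
  proof -
    have [measurable]: "(\<lambda>\<omega>. \<Sum>i=1..t. X i \<omega>) \<in> borel_measurable M"
      using that X_measurable by (intro borel_measurable_sum) auto
    show ?thesis
      unfolding f_def by measurable
  qed
  then have "1 - 2 * ?B \<le> prob {\<omega>\<in>space M. \<forall>t\<in>{1..L}. \<bar>f t \<omega>\<bar> \<le> ?r t}"
    by (intro prob_forall_abs_le_ge[OF _ _ upper lower]) auto
  then show ?thesis
    unfolding f_def .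
qed

theorem lemma11:
  fixes M :: "'a measure" and X :: "nat \<Rightarrow> 'a \<Rightarrow> real"
    and L :: nat and \<mu> a b :: real
  assumes "prob_space M"
    and "L \<ge> 1"
    and "\<And>i. i \<in> {1..L} \<Longrightarrow> X i \<in> borel_measurable M"
    and "prob_space.indep_vars M (\<lambda>_. borel) X {1..L}"
    and "\<And>i. i \<in> {1..L} \<Longrightarrow> distr M borel (X i) = distr M borel (X 1)"
    and "\<And>i. i \<in> {1..L} \<Longrightarrow> (AE \<omega> in M. X i \<omega> \<in> {0..1})"
    and "\<And>i. i \<in> {1..L} \<Longrightarrow> prob_space.expectation M (X i) = \<mu>"
    and "a > 0" and "b > 0"
  shows "measure M {\<omega> \<in> space M. \<forall>t\<in>{1..L}.
            \<bar>(\<Sum>i=1..t. X i \<omega>) / real t - \<mu>\<bar> \<le> sqrt ((a + b * ln (real L / real t)) / real t)}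
         \<ge> 1 - (2 powr (b/2 + 2) / (2 powr (b/2) - 1)) * exp (-a/2)"
proof -
  interpret prob_space M
    by (rule assms(1))
  show ?thesis
    using prob_forall_mean_deviation_le_ge[OF assms(4,6,7,8,9)] peeling_constant_le[OF assms(8,9)]
    by linarith
qed

end
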